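(* Let $\alpha\in\mathbb{Q}(i)\setminus\mathbb{R}$ with $|\alpha|>1$, with minimal primitive polynomial $P_\alpha(X)=a_2X^2+a_1X+a_0$ ($a_0,a_1,a_2\in\mathbb{Z}$ coprime, $a_2>0$, $P_\alpha(\alpha)=0$), $\mathcal{D}=\{0,\ldots,|a_0|-1\}$ and $\Lambda_\alpha=\mathbb{Z}[\alpha]\cap\alpha^{-1}\mathbb{Z}[\alpha^{-1}]$. For $N\in\Lambda_\alpha$ let $D(N)=\{d\in\mathcal{D}: \alpha N+d\in\Lambda_\alpha\}$. Then for every $N\in\Lambda_\alpha$ there exists $r\in\mathbb{Z}$ such that $D(N)=\mathcal{D}\cap(a_2\mathbb{Z}+r)$. *)

theory Defs
  imports "HOL-Complex_Analysis.Complex_Analysis" "HOL-Computational_Algebra.Polynomial"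
begin

definition int_poly_ring :: "complex \<Rightarrow> complex set" where
  "int_poly_ring a = {poly (map_poly of_int p) a | p :: int poly. True}"

definition Lambda_set :: "complex \<Rightarrow> complex set" where
  "Lambda_set a = int_poly_ring a \<inter> {inverse a * z | z. z \<in> int_poly_ring (inverse a)}"

definition digit_set :: "int \<Rightarrow> int set" where
  "digit_set a0 = {d. 0 \<le> d \<and> d \<le> \<bar>a0\<bar> - 1}"

definition admissible_digits :: "complex \<Rightarrow> int \<Rightarrow> complex \<Rightarrow> int set" where
  "admissible_digits a a0 N = {d \<in> digit_set a0. a * N + of_int d \<in> Lambda_set a}"

end

theory Submission
  imports Defs "HOL-Computational_Algebra.Polynomial_Factorial"
begin

text \<open>Write \<open>\<beta> = \<alpha>\<^sup>-\<^sup>1\<close>, a non-real root of the primitive quadratic \<open>a\<^sub>2 + a\<^sub>1X + a\<^sub>0X\<^sup>2\<close>.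
  By Gauss's lemma this polynomial divides every integer polynomial vanishing at \<open>\<beta>\<close>;
  comparing constant terms shows that an integer lies in \<open>\<beta>\<int>[\<beta>]\<close> exactly when it is
  divisible by \<open>a\<^sub>2\<close>. For \<open>N \<in> \<Lambda>\<^sub>\<alpha>\<close> the number \<open>\<alpha>N + d\<close> always lies in \<open>\<int>[\<alpha>]\<close>, and
  writing \<open>\<alpha>N = c + \<beta>z\<close> with \<open>z \<in> \<int>[\<beta>]\<close> it lies in \<open>\<beta>\<int>[\<beta>]\<close> iff \<open>c + d\<close> does, i.e. iff
  \<open>d \<equiv> -c (mod a\<^sub>2)\<close>.\<close>

lemma map_poly_of_int_add [simp]:
  "map_poly (of_int :: int \<Rightarrow> 'a :: comm_ring_1) (p + q) = map_poly of_int p + map_poly of_int q"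
  by (intro poly_eqI) (simp add: coeff_map_poly)

lemma map_poly_of_int_diff [simp]:
  "map_poly (of_int :: int \<Rightarrow> 'a :: comm_ring_1) (p - q) = map_poly of_int p - map_poly of_int q"
  by (intro poly_eqI) (simp add: coeff_map_poly)

lemma map_poly_of_int_uminus [simp]:
  "map_poly (of_int :: int \<Rightarrow> 'a :: comm_ring_1) (- p) = - map_poly of_int p"
  by (intro poly_eqI) (simp add: coeff_map_poly)

lemma map_poly_of_int_mult [simp]:
  "map_poly (of_int :: int \<Rightarrow> 'a :: comm_ring_1) (p * q) = map_poly of_int p * map_poly of_int q"
  by (intro poly_eqI) (simp add: coeff_map_poly coeff_mult)

lemma int_poly_ring_add:
  "z \<in> int_poly_ring a \<Longrightarrow> w \<in> int_poly_ring a \<Longrightarrow> z + w \<in> int_poly_ring a"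
  unfolding int_poly_ring_def by clarify (metis map_poly_of_int_add poly_add)

lemma int_poly_ring_diff:
  "z \<in> int_poly_ring a \<Longrightarrow> w \<in> int_poly_ring a \<Longrightarrow> z - w \<in> int_poly_ring a"
  unfolding int_poly_ring_def by clarify (metis map_poly_of_int_diff poly_diff)

lemma int_poly_ring_Horner_iff:
  "z \<in> int_poly_ring a \<longleftrightarrow> (\<exists>c w. w \<in> int_poly_ring a \<and> z = of_int c + a * w)"
proof
  assume "z \<in> int_poly_ring a"
  then obtain p where "z = poly (map_poly of_int p) a"
    unfolding int_poly_ring_def by blast
  then show "\<exists>c w. w \<in> int_poly_ring a \<and> z = of_int c + a * w"
    by (cases p) (auto simp: map_poly_pCons int_poly_ring_def)
next
  assume "\<exists>c w. w \<in> int_poly_ring a \<and> z = of_int c + a * w"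
  then obtain c p where "z = of_int c + a * poly (map_poly of_int p) a"
    unfolding int_poly_ring_def by blast
  then have "z = poly (map_poly of_int (pCons c p)) a"
    by (simp add: map_poly_pCons)
  then show "z \<in> int_poly_ring a"
    unfolding int_poly_ring_def by blast
qed

lemma of_int_add_nonreal_mult_eq_0_iff:
  fixes c d :: int and b :: complex
  assumes "b \<notin> \<real>"
  shows "of_int c + b * of_int d = 0 \<longleftrightarrow> c = 0 \<and> d = 0"
proof
  assume eq: "of_int c + b * of_int d = 0"
  have "d = 0"
  proof (rule ccontr)
    assume "d \<noteq> 0"
    with eq have "b = - of_int c / of_int d"
      by (simp add: field_simps add_eq_0_iff)
    with assms show False by simp
  qed
  with eq show "c = 0 \<and> d = 0" by simp
qed simp

lemma int_poly_degree_le_1_eq_0_of_nonreal_root: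
  fixes r :: "int poly" and b :: complex
  assumes "degree r \<le> 1" "poly (map_poly of_int r) b = 0" "b \<notin> \<real>"
  shows "r = 0"
proof -
  have r: "r = [:coeff r 0, coeff r 1:]"
    using assms(1) by (intro poly_eqI) (auto simp: coeff_pCons coeff_eq_0 split: nat.splits)
  have "of_int (coeff r 0) + b * of_int (coeff r 1) = 0"
    using assms(2) by (subst (asm) r) (simp add: map_poly_pCons)
  then show ?thesis
    using assms(3) by (subst r) (simp add: of_int_add_nonreal_mult_eq_0_iff)
qed

text \<open>The pseudo-remainder has degree at most 1 and vanishes at \<open>b\<close>, hence is zero;
  primitivity then removes the leading-coefficient factor (Gauss's lemma).\<close>
lemma primitive_quadratic_dvd_of_nonreal_root:
  fixes f g :: "int poly" and b :: complex
  assumes "content f = 1" "degree f = 2" "b \<notin> \<real>"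
    and "poly (map_poly of_int f) b = 0" "poly (map_poly of_int g) b = 0"
  shows "f dvd g"
proof -
  have "f \<noteq> 0" using assms(2) by auto
  obtain h r where hr: "pseudo_divmod g f = (h, r)" by (metis surj_pair)
  define k where "k = lead_coeff f ^ (Suc (degree g) - degree f)"
  have k: "k \<noteq> 0" using \<open>f \<noteq> 0\<close> by (simp add: k_def)
  have division: "smult k g = f * h + r" and "r = 0 \<or> degree r < degree f"
    using pseudo_divmod[OF \<open>f \<noteq> 0\<close> hr] by (simp_all add: k_def)
  then have "degree r \<le> 1" using assms(2) by auto
  moreover have "poly (map_poly of_int (smult k g)) b = 0"
    using assms(5) by (simp add: map_poly_smult)
  then have "poly (map_poly of_int r) b = 0"
    using assms(4) by (simp add: division)
  ultimately have "r = 0"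
    using assms(3) int_poly_degree_le_1_eq_0_of_nonreal_root by blast
  with division have "fract_poly f dvd smult (to_fract k) (fract_poly g)"
    by (metis dvd_triv_left add_0_right fract_poly_dvd fract_poly_smult)
  with k have "fract_poly f dvd fract_poly g"
    by (simp add: dvd_smult_cancel)
  then show ?thesis using assms(1) by (rule fract_poly_dvdD)
qed

lemma of_int_in_mult_int_poly_ring_iff:
  fixes a0 a1 a2 n :: int and b :: complex
  assumes "content [:a2, a1, a0:] = 1" "a0 \<noteq> 0" "b \<notin> \<real>"
    and root: "poly (map_poly of_int [:a2, a1, a0:]) b = 0"
  shows "of_int n \<in> (*) b ` int_poly_ring b \<longleftrightarrow> a2 dvd n"
proof
  assume "of_int n \<in> (*) b ` int_poly_ring b"
  then obtain q where q: "of_int n = b * poly (map_poly of_int q) b"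
    unfolding int_poly_ring_def by blast
  have "poly (map_poly of_int (pCons n (- q))) b = 0"
    using q by (simp add: map_poly_pCons)
  with assms have "[:a2, a1, a0:] dvd pCons n (- q)"
    by (intro primitive_quadratic_dvd_of_nonreal_root) auto
  then obtain h where "pCons n (- q) = [:a2, a1, a0:] * h" ..
  then have "n = a2 * coeff h 0"
    by (metis coeff_mult_0 coeff_pCons_0)
  then show "a2 dvd n" by simp
next
  assume "a2 dvd n"
  then obtain k where k: "n = a2 * k" ..
  have "of_int n - b * poly (map_poly of_int [:- a1 * k, - a0 * k:]) b
      = of_int k * poly (map_poly of_int [:a2, a1, a0:]) b"
    unfolding k by (simp add: map_poly_pCons algebra_simps)
  with root have "of_int n = b * poly (map_poly of_int [:- a1 * k, - a0 * k:]) b"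
    by simp
  then show "of_int n \<in> (*) b ` int_poly_ring b"
    unfolding int_poly_ring_def by blast
qed

lemma mult_int_poly_ring_add_iff:
  assumes "w \<in> int_poly_ring b"
  shows "x + b * w \<in> (*) b ` int_poly_ring b \<longleftrightarrow> x \<in> (*) b ` int_poly_ring b"
proof
  assume "x + b * w \<in> (*) b ` int_poly_ring b"
  then obtain u where "u \<in> int_poly_ring b" "x + b * w = b * u" by blast
  then have "x = b * (u - w)" "u - w \<in> int_poly_ring b"
    using assms int_poly_ring_diff by (auto simp: algebra_simps)
  then show "x \<in> (*) b ` int_poly_ring b" by blast
next
  assume "x \<in> (*) b ` int_poly_ring b"
  then obtain u where "u \<in> int_poly_ring b" "x = b * u" by blast
  then have "x + b * w = b * (u + w)" "u + w \<in> int_poly_ring b"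
    using assms int_poly_ring_add by (auto simp: algebra_simps)
  then show "x + b * w \<in> (*) b ` int_poly_ring b" by blast
qed

lemma admissible_digits_residue_class:
  fixes \<alpha> :: complex and m a0 :: int
  assumes "\<alpha> \<noteq> 0" "N \<in> Lambda_set \<alpha>"
    and integers: "\<And>n. of_int n \<in> (*) (inverse \<alpha>) ` int_poly_ring (inverse \<alpha>) \<longleftrightarrow> m dvd n"
  shows "\<exists>r. admissible_digits \<alpha> a0 N = digit_set a0 \<inter> {m * k + r | k. True}"
proof -
  let ?I = "(*) (inverse \<alpha>) ` int_poly_ring (inverse \<alpha>)"
  have Lambda: "Lambda_set \<alpha> = int_poly_ring \<alpha> \<inter> ?I"
    by (auto simp: Lambda_set_def)
  obtain z where N: "N \<in> int_poly_ring \<alpha>" "z \<in> int_poly_ring (inverse \<alpha>)" "N = inverse \<alpha> * z"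
    using assms(2) Lambda by blast
  then obtain c w where w: "w \<in> int_poly_ring (inverse \<alpha>)" "z = of_int c + inverse \<alpha> * w"
    using int_poly_ring_Horner_iff by blast
  have "\<alpha> * N = of_int c + inverse \<alpha> * w"
    using N(3) w(2) assms(1) by simp
  have "\<alpha> * N + of_int d \<in> Lambda_set \<alpha> \<longleftrightarrow> m dvd (c + d)" for d
  proof -
    have "\<alpha> * N + of_int d \<in> int_poly_ring \<alpha>"
      using N(1) int_poly_ring_Horner_iff[of "\<alpha> * N + of_int d"] by (auto simp: add.commute)
    then have "\<alpha> * N + of_int d \<in> Lambda_set \<alpha> \<longleftrightarrow> \<alpha> * N + of_int d \<in> ?I"
      using Lambda by blast
    also have "\<dots> \<longleftrightarrow> of_int (c + d) \<in> ?I"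
      unfolding \<open>\<alpha> * N = of_int c + inverse \<alpha> * w\<close>
      using mult_int_poly_ring_add_iff[OF w(1), of "of_int (c + d)"] by (simp add: ac_simps)
    also have "\<dots> \<longleftrightarrow> m dvd (c + d)"
      by (rule integers)
    finally show ?thesis .
  qed
  moreover have "m dvd (c + d) \<longleftrightarrow> (\<exists>k. d = m * k + - c)" for d
    by (auto simp: dvd_def algebra_simps)
  ultimately have "admissible_digits \<alpha> a0 N = digit_set a0 \<inter> {m * k + - c | k. True}"
    unfolding admissible_digits_def by auto
  then show ?thesis ..
qed

theorem mainTheorem6:
  fixes \<alpha> :: complex and a0 a1 a2 :: int
  assumes "Re \<alpha> \<in> \<rat>" and "Im \<alpha> \<in> \<rat>" and "\<alpha> \<notin> \<real>"
    and "cmod \<alpha> > 1"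
    and "gcd a0 (gcd a1 a2) = 1" and "a2 > 0"
    and "of_int a2 * \<alpha>\<^sup>2 + of_int a1 * \<alpha> + of_int a0 = 0"
  shows "\<forall>N \<in> Lambda_set \<alpha>. \<exists>r :: int.
           admissible_digits \<alpha> a0 N = digit_set a0 \<inter> {a2 * k + r | k :: int. True}"
proof
  fix N assume N: "N \<in> Lambda_set \<alpha>"
  have "\<alpha> \<noteq> 0" using assms(3) by auto
  have "a0 \<noteq> 0"
  proof
    assume "a0 = 0"
    with assms(7) have "\<alpha> * (of_int a1 + \<alpha> * of_int a2) = 0"
      by (simp add: power2_eq_square algebra_simps)
    with \<open>\<alpha> \<noteq> 0\<close> have "of_int a1 + \<alpha> * of_int a2 = 0"
      by simp
    with assms(3,6) show False
      by (simp add: of_int_add_nonreal_mult_eq_0_iff)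
  qed
  have "inverse \<alpha> \<notin> \<real>" using assms(3) by (metis Reals_inverse inverse_inverse_eq)
  have "poly (map_poly of_int [:a2, a1, a0:]) (inverse \<alpha>) = 0"
    using assms(7) \<open>\<alpha> \<noteq> 0\<close> by (simp add: map_poly_pCons field_simps power2_eq_square)
  moreover have "content [:a2, a1, a0:] = 1"
    using assms(5) \<open>a0 \<noteq> 0\<close> by (simp add: content_def ac_simps)
  ultimately show "\<exists>r. admissible_digits \<alpha> a0 N = digit_set a0 \<inter> {a2 * k + r | k. True}"
    using admissible_digits_residue_class[OF \<open>\<alpha> \<noteq> 0\<close> N]
      of_int_in_mult_int_poly_ring_iff \<open>a0 \<noteq> 0\<close> \<open>inverse \<alpha> \<notin> \<real>\<close> by blast
qed

end
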